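(* Under all hypotheses of Proposition 1 (stated in the context below), suppose in addition that $P\big(y_j^\star(T)=0\big)=0$ for every $j=1,\dots,m$. Then $$P\Big(\exists s\in[0,T]:\ \hat y^n(s)\notin\Omega_-\Big)\ \longrightarrow\ P\Big(\exists s\in[0,T]:\ x(s)\notin X_{\mathrm{safe}}\Big)\quad(n\to\infty),$$ where $X_{\mathrm{safe}}=\{x: g_j(x)\le0\ \forall j\}$ and $\Omega_-$ is the non-positive orthant of $\mathbb{R}^m$.
   Context: Hypotheses of Proposition 1: $x(t)$ solves the Itô SDE $dx=f(t,x,u)dt+G(t,x,u)dw$ on $[0,T]$ with $w$ a standard Brownian motion and $u$ a progressively measurable control; $g_1,\dots,g_m$ are $C^2$ with gradients $a_j$, Hessians $H_j$; for each $j$, either $u(t)=\kappa(t,x(t))$ with $\kappa$ deterministic Lipschitz, or $a_j^\top f$ and $a_j^\top G$ do not depend on $u$; for each $j$, either ($G$ constant and $a_j$ Lipschitz) or ($a_j$ constant and $G$ Lipschitz) or ($a_j$ and $G$ bounded and Lipschitz); $f_t=f(t,x(t),u(t))$ is pathwise bounded a.s. with $\mathbb{E}\int_0^T\|f_t\|^2dt<\infty$; $G_t=G(t,x(t),u(t))$ has $\mathbb{E}\|G_t\|^2$ bounded on $[0,T]$ and $\mathbb{E}\int_0^T\|G_t\|^2dt<\infty$; partitions $\mathcal{P}_n=\{0=t_0<\dots<t_{k_n}=T\}$ have mesh $\delta_n\to0$ with $k_n\delta_n\le cT$. $y(t)=(g_j(x(t)))_j$; $y_j^\star(T)=\sup_{s\in[0,T]}y_j(s)$.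 $\hat y^n(s)\triangleq y(t)+(s-t)h_t+\Sigma_t(w(s)-w(t))$ with $t=\max\{t_i\in\mathcal{P}_n:t_i\le s\}$, $h_{t,j}=a_j(x(t))^\top f_t+\frac12\mathrm{tr}(G_t^\top H_j(x(t))G_t)$, and $\Sigma_t$ the matrix with rows $a_j(x(t))^\top G_t$. *)

theory Defs
  imports "HOL-Probability.Probability"
begin

definition filtered_ps :: "'a measure \<Rightarrow> (real \<Rightarrow> 'a measure) \<Rightarrow> bool" where
  "filtered_ps M F \<longleftrightarrow> prob_space M \<and> filtration (space M) F \<and> (\<forall>t. sets (F t) \<subseteq> sets M)"

definition std_brownian :: "'a measure \<Rightarrow> (real \<Rightarrow> 'a measure) \<Rightarrow> (real \<Rightarrow> 'a \<Rightarrow> real^'p) \<Rightarrow> bool" where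
  "std_brownian M F w \<longleftrightarrow>
     (\<forall>\<omega>\<in>space M. w 0 \<omega> = 0) \<and>
     (\<forall>\<omega>\<in>space M. continuous_on {0..} (\<lambda>t. w t \<omega>)) \<and>
     (\<forall>t\<ge>0. w t \<in> borel_measurable (F t)) \<and>
     (\<forall>s t. 0 \<le> s \<and> s < t \<longrightarrow>
        prob_space.indep_vars M (\<lambda>_. borel) (\<lambda>i \<omega>. (w t \<omega> - w s \<omega>) $ i) (UNIV :: 'p set) \<and>
        (\<forall>i. distributed M lborel (\<lambda>\<omega>. (w t \<omega> - w s \<omega>) $ i)
               (\<lambda>z. ennreal (normal_density 0 (sqrt (t - s)) z))) \<and>
        (\<forall>A\<in>sets (F s). \<forall>B\<in>sets (borel :: (real^'p) measure).
            measure M (A \<inter> {\<omega>\<in>space M. w t \<omega> - w s \<omega> \<in> B})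
              = measure M A * measure M {\<omega>\<in>space M. w t \<omega> - w s \<omega> \<in> B}))"

definition progressive :: "(real \<Rightarrow> 'a measure) \<Rightarrow> (real \<Rightarrow> 'a \<Rightarrow> 'b::topological_space) \<Rightarrow> bool" where
  "progressive F X \<longleftrightarrow>
     (\<forall>t\<ge>0. (\<lambda>(s, \<omega>). X s \<omega>) \<in> borel_measurable (restrict_space lborel {0..t} \<Otimes>\<^sub>M F t))"

definition simple_proc :: "(nat \<Rightarrow> real) \<Rightarrow> nat \<Rightarrow> (nat \<Rightarrow> 'a \<Rightarrow> real^'p^'d) \<Rightarrow> real \<Rightarrow> 'a \<Rightarrow> real^'p^'d" where
  "simple_proc r N \<xi> s \<omega> = (\<Sum>i<N. indicator {r i..<r (Suc i)} s *\<^sub>R \<xi> i \<omega>)"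

definition simple_ito :: "(nat \<Rightarrow> real) \<Rightarrow> nat \<Rightarrow> (nat \<Rightarrow> 'a \<Rightarrow> real^'p^'d) \<Rightarrow> (real \<Rightarrow> 'a \<Rightarrow> real^'p)
     \<Rightarrow> real \<Rightarrow> 'a \<Rightarrow> real^'d" where
  "simple_ito r N \<xi> w t \<omega> = (\<Sum>i<N. \<xi> i \<omega> *v (w (min t (r (Suc i))) \<omega> - w (min t (r i)) \<omega>))"

definition simple_adapted :: "'a measure \<Rightarrow> (real \<Rightarrow> 'a measure) \<Rightarrow> real \<Rightarrow> (nat \<Rightarrow> real) \<Rightarrow> nat
     \<Rightarrow> (nat \<Rightarrow> 'a \<Rightarrow> real^'p^'d) \<Rightarrow> bool" where
  "simple_adapted M F T r N \<xi> \<longleftrightarrow> r 0 = 0 \<and> r N = T \<and> (\<forall>i<N. r i < r (Suc i)) \<and>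
     (\<forall>i<N. \<xi> i \<in> borel_measurable (F (r i)) \<and> (\<exists>B. \<forall>\<omega>\<in>space M. norm (\<xi> i \<omega>) \<le> B))"

definition ito_integral :: "'a measure \<Rightarrow> (real \<Rightarrow> 'a measure) \<Rightarrow> (real \<Rightarrow> 'a \<Rightarrow> real^'p) \<Rightarrow> real
     \<Rightarrow> (real \<Rightarrow> 'a \<Rightarrow> real^'p^'d) \<Rightarrow> (real \<Rightarrow> 'a \<Rightarrow> real^'d) \<Rightarrow> bool" where
  "ito_integral M F w T G I \<longleftrightarrow>
     progressive F G \<and>
     (\<integral>\<^sup>+\<omega>. (\<integral>\<^sup>+s\<in>{0..T}. ennreal ((norm (G s \<omega>))\<^sup>2) \<partial>lborel) \<partial>M) < \<infinity> \<and>
     (\<exists>r N \<xi>. (\<forall>k. simple_adapted M F T (r k) (N k) (\<xi> k)) \<and>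
        (\<lambda>k. \<integral>\<^sup>+\<omega>. (\<integral>\<^sup>+s\<in>{0..T}. ennreal ((norm (simple_proc (r k) (N k) (\<xi> k) s \<omega> - G s \<omega>))\<^sup>2)
               \<partial>lborel) \<partial>M) \<longlonglongrightarrow> 0 \<and>
        (\<forall>t\<in>{0..T}. (\<lambda>k. \<integral>\<^sup>+\<omega>. ennreal ((norm (simple_ito (r k) (N k) (\<xi> k) w t \<omega> - I t \<omega>))\<^sup>2) \<partial>M)
               \<longlonglongrightarrow> 0))"

definition sde_solution :: "'a measure \<Rightarrow> (real \<Rightarrow> 'a measure) \<Rightarrow> (real \<Rightarrow> 'a \<Rightarrow> real^'p) \<Rightarrow> real
     \<Rightarrow> (real \<Rightarrow> real^'d \<Rightarrow> 'u \<Rightarrow> real^'d) \<Rightarrow> (real \<Rightarrow> real^'d \<Rightarrow> 'u \<Rightarrow> real^'p^'d)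
     \<Rightarrow> (real \<Rightarrow> 'a \<Rightarrow> 'u) \<Rightarrow> (real \<Rightarrow> 'a \<Rightarrow> real^'d) \<Rightarrow> bool" where
  "sde_solution M F w T f G u x \<longleftrightarrow>
     (\<forall>\<omega>\<in>space M. continuous_on {0..T} (\<lambda>t. x t \<omega>)) \<and>
     (\<forall>t\<in>{0..T}. x t \<in> borel_measurable (F t)) \<and>
     (\<exists>I. ito_integral M F w T (\<lambda>s \<omega>. G s (x s \<omega>) (u s \<omega>)) I \<and>
        (\<forall>t\<in>{0..T}. AE \<omega> in M.
           x t \<omega> = x 0 \<omega> + (LINT s:{0..t}|lborel. f s (x s \<omega>) (u s \<omega>)) + I t \<omega>))"

definition is_partition :: "real \<Rightarrow> (nat \<Rightarrow> real) \<Rightarrow> nat \<Rightarrow> bool" where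
  "is_partition T tp k \<longleftrightarrow> tp 0 = 0 \<and> tp k = T \<and> (\<forall>i<k. tp i < tp (Suc i))"

definition mesh :: "(nat \<Rightarrow> real) \<Rightarrow> nat \<Rightarrow> real" where
  "mesh tp k = Max ((\<lambda>i. tp (Suc i) - tp i) ` {..<k})"

definition last_grid :: "(nat \<Rightarrow> real) \<Rightarrow> nat \<Rightarrow> real \<Rightarrow> real" where
  "last_grid tp k s = Max {tp i | i. i \<le> k \<and> tp i \<le> s}"

text \<open>The piecewise approximation yhat^n of y(s) = (g_j(x(s)))_j.\<close>
definition yhat :: "(nat \<Rightarrow> real) \<Rightarrow> nat \<Rightarrow> ('m \<Rightarrow> real^'d \<Rightarrow> real) \<Rightarrow> ('m \<Rightarrow> real^'d \<Rightarrow> real^'d)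
     \<Rightarrow> ('m \<Rightarrow> real^'d \<Rightarrow> real^'d^'d) \<Rightarrow> (real \<Rightarrow> real^'d \<Rightarrow> 'u \<Rightarrow> real^'d)
     \<Rightarrow> (real \<Rightarrow> real^'d \<Rightarrow> 'u \<Rightarrow> real^'p^'d) \<Rightarrow> (real \<Rightarrow> 'a \<Rightarrow> 'u) \<Rightarrow> (real \<Rightarrow> 'a \<Rightarrow> real^'d)
     \<Rightarrow> (real \<Rightarrow> 'a \<Rightarrow> real^'p) \<Rightarrow> real \<Rightarrow> 'a \<Rightarrow> real^'m" where
  "yhat tp k g a H f G u x w s \<omega> =
     (let t = last_grid tp k s;
          xt = x t \<omega>; ft = f t xt (u t \<omega>); Gt = G t xt (u t \<omega>);
          y = (\<chi> j. g j xt);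
          h = (\<chi> j. a j xt \<bullet> ft + 1/2 * trace (transpose Gt ** H j xt ** Gt));
          \<Sigma> = (\<chi> j. a j xt v* Gt)
      in y + (s - t) *\<^sub>R h + \<Sigma> *v (w s \<omega> - w t \<omega>))"

definition lipschitz_fun :: "('b::metric_space \<Rightarrow> 'c::metric_space) \<Rightarrow> bool" where
  "lipschitz_fun h \<longleftrightarrow> (\<exists>L. \<forall>p q. dist (h p) (h q) \<le> L * dist p q)"

end

theory Submission
  imports Defs
begin

text \<open>Along a fixed sample path, the j-th component of \<open>yhat\<close> differs from \<open>g j (x s)\<close> by the
  oscillation of \<open>g j \<circ> x\<close> and of \<open>w\<close> over one partition cell, weighted by bounds on the Ito
  coefficients along the path; hence \<open>yhat\<close> converges uniformly to \<open>g \<circ> x\<close> on \<open>[0,T]\<close> whenever the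
  drift is bounded on the path. Leaving the orthant is stable under uniform perturbation as long as
  no supremum \<open>sup\<^sub>s g j (x s)\<close> equals \<open>0\<close>, which holds almost surely, so the indicators of the
  exit events converge almost surely and dominated convergence concludes. The exit events are
  measurable because \<open>yhat\<close> is right-continuous, so suprema over \<open>[0,T]\<close> may be taken over
  rational times.\<close>

lemma partition_less:
  assumes "is_partition T tp k" "i < j" "j \<le> k"
  shows "tp i < tp j"
  using assms(2,3)
proof (induction j)
  case (Suc j)
  have "tp j < tp (Suc j)" using assms(1) Suc.prems unfolding is_partition_def by auto
  then show ?case using Suc by (cases "i = j") auto
qed simp

lemma partition_le:
  assumes "is_partition T tp k" "i \<le> j" "j \<le> k"
  shows "tp i \<le> tp j"
  using partition_less[OF assms(1), of i j] assms by (cases "i = j") auto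

lemma partition_in_range:
  assumes "is_partition T tp k" "i \<le> k"
  shows "tp i \<in> {0..T}"
  using partition_le[OF assms(1), of 0 i] partition_le[OF assms(1), of i k] assms
  unfolding is_partition_def by auto

lemma last_grid_eqI:
  assumes P: "is_partition T tp k" and "i \<le> k" "tp i \<le> s" and up: "i < k \<Longrightarrow> s < tp (Suc i)"
  shows "last_grid tp k s = tp i"
  unfolding last_grid_def
proof (rule Max_eqI)
  fix y assume "y \<in> {tp i | i. i \<le> k \<and> tp i \<le> s}"
  then obtain l where l: "y = tp l" "l \<le> k" "tp l \<le> s" by blast
  show "y \<le> tp i"
  proof (cases "l \<le> i")
    case False
    then have "tp (Suc i) \<le> tp l" using partition_le[OF P _ l(2)] by simp
    then show ?thesis using up l False by fastforce
  qed (use partition_le[OF P _ \<open>i \<le> k\<close>] l in simp)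
qed (use assms in auto)

lemma last_grid_cell:
  assumes P: "is_partition T tp k" and s: "s \<in> {0..T}"
  obtains i where "i \<le> k" "tp i \<le> s" "i < k \<Longrightarrow> s < tp (Suc i)" "last_grid tp k s = tp i"
proof -
  let ?I = "{i. i \<le> k \<and> tp i \<le> s}"
  have "0 \<in> ?I" using P s unfolding is_partition_def by auto
  define i where "i = Max ?I"
  have i: "i \<in> ?I" unfolding i_def using \<open>0 \<in> ?I\<close> by (intro Max_in) auto
  have "s < tp (Suc i)" if "i < k"
  proof (rule ccontr)
    assume "\<not> s < tp (Suc i)"
    then have "Suc i \<in> ?I" using that by auto
    then have "Suc i \<le> i" unfolding i_def by (intro Max_ge) auto
    then show False by simp
  qed
  then show ?thesis using that i last_grid_eqI[OF P, of i s] by auto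
qed

lemma last_grid_bounds:
  assumes P: "is_partition T tp k" and T: "T > 0" and s: "s \<in> {0..T}"
  shows "0 \<le> last_grid tp k s" "last_grid tp k s \<le> s" "s - last_grid tp k s \<le> mesh tp k"
proof -
  obtain i where i: "i \<le> k" "tp i \<le> s" "i < k \<Longrightarrow> s < tp (Suc i)" "last_grid tp k s = tp i"
    using last_grid_cell[OF P s] by blast
  have mesh_ge: "tp (Suc l) - tp l \<le> mesh tp k" if "l < k" for l
    unfolding mesh_def using that by (intro Max_ge) auto
  have "k \<noteq> 0" using P T unfolding is_partition_def by (metis less_irrefl)
  then have "0 \<le> mesh tp k" using mesh_ge[of 0] partition_less[OF P, of 0 1] by simp
  then show "s - last_grid tp k s \<le> mesh tp k"
    using i mesh_ge[of i] s P unfolding is_partition_def by (cases "i < k") auto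
  show "0 \<le> last_grid tp k s" "last_grid tp k s \<le> s" using i partition_in_range[OF P] by auto
qed

lemma bounded_on_cball_Times:
  fixes \<phi> :: "'b::euclidean_space \<Rightarrow> 'c::euclidean_space \<Rightarrow> 'e::real_normed_vector"
  assumes "continuous_on UNIV (\<lambda>p. \<phi> (fst p) (snd p))"
  shows "\<exists>K. \<forall>p q. norm p \<le> A \<longrightarrow> norm q \<le> B \<longrightarrow> norm (\<phi> p q) \<le> K"
proof -
  obtain K where "\<And>pq. pq \<in> cball 0 A \<times> cball 0 B \<Longrightarrow> norm (\<phi> (fst pq) (snd pq)) \<le> K"
    using continuous_on_compact_bound[OF compact_Times[OF compact_cball compact_cball]
        continuous_on_subset[OF assms]] by blast
  then show ?thesis by force
qed

lemma continuous_on_vector_matrix_mult: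
  "continuous_on UNIV (\<lambda>p. (fst p::real^'m) v* (snd p::real^'n^'m))"
  unfolding vector_matrix_mult_def
  by (intro continuous_on_vec_lambda continuous_intros)

lemma continuous_on_trace_congruence:
  "continuous_on UNIV (\<lambda>p. trace (transpose (fst p::real^'n^'m) ** (snd p::real^'m^'m) ** fst p))"
  unfolding trace_def matrix_matrix_mult_def transpose_def
  by (simp, intro continuous_intros)

lemma borel_measurable_continuous_on_Pair:
  fixes A :: "'a \<Rightarrow> 'b::second_countable_topology" and B :: "'a \<Rightarrow> 'c::second_countable_topology"
  assumes "continuous_on UNIV (\<lambda>p. \<phi> (fst p) (snd p))" "A \<in> borel_measurable M" "B \<in> borel_measurable M"
  shows "(\<lambda>\<omega>. \<phi> (A \<omega>) (B \<omega>)) \<in> borel_measurable M"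
  using borel_measurable_continuous_on[OF assms(1), of "\<lambda>\<omega>. (A \<omega>, B \<omega>)"] assms(2,3) by simp

lemma lipschitz_fun_continuous_on: "lipschitz_fun h \<Longrightarrow> continuous_on S h"
proof -
  assume "lipschitz_fun h"
  then obtain L where L: "\<And>p q. dist (h p) (h q) \<le> L * dist p q" unfolding lipschitz_fun_def by blast
  have "dist (h p) (h q) \<le> max L 0 * dist p q" for p q
    using L[of p q] mult_right_mono[of L "max L 0" "dist p q"] by simp
  then have "(max L 0)-lipschitz_on S h" unfolding lipschitz_on_def by simp
  then show ?thesis by (rule lipschitz_on_continuous_on)
qed

lemma filtered_ps_measurable:
  assumes "filtered_ps M F" "h \<in> borel_measurable (F t)"
  shows "h \<in> borel_measurable M"
proof -
  have "subalgebra M (F t)"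
    using assms(1) unfolding filtered_ps_def subalgebra_def using filtration.space_F by blast
  then show ?thesis using measurable_from_subalg assms(2) by blast
qed

lemma progressive_measurable:
  assumes "progressive F X" "0 \<le> t"
  shows "X t \<in> borel_measurable (F t)"
proof -
  have m: "(\<lambda>(s, \<omega>). X s \<omega>) \<in> borel_measurable (restrict_space lborel {0..t} \<Otimes>\<^sub>M F t)"
    using assms unfolding progressive_def by blast
  have p: "Pair t \<in> measurable (F t) (restrict_space lborel {0..t} \<Otimes>\<^sub>M F t)"
    using assms(2) by (intro measurable_Pair1') (simp add: space_restrict_space)
  show ?thesis using measurable_comp[OF p m] by (simp add: comp_def)
qed

lemma sde_solution_paths:
  assumes fps: "filtered_ps M F" and BM: "std_brownian M F w" and u: "progressive F u"
    and sol: "sde_solution M F w T f G u x"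
  shows "\<And>\<omega>. \<omega> \<in> space M \<Longrightarrow> continuous_on {0..T} (\<lambda>t. x t \<omega>)"
    and "\<And>\<omega>. \<omega> \<in> space M \<Longrightarrow> continuous_on {0..T} (\<lambda>t. w t \<omega>)"
    and "\<And>t. t \<in> {0..T} \<Longrightarrow> x t \<in> borel_measurable M"
    and "\<And>t. t \<in> {0..T} \<Longrightarrow> w t \<in> borel_measurable M"
    and "\<And>t. t \<in> {0..T} \<Longrightarrow> u t \<in> borel_measurable M"
proof -
  show "\<And>\<omega>. \<omega> \<in> space M \<Longrightarrow> continuous_on {0..T} (\<lambda>t. x t \<omega>)"
    and "\<And>t. t \<in> {0..T} \<Longrightarrow> x t \<in> borel_measurable M"
    using sol filtered_ps_measurable[OF fps] unfolding sde_solution_def by blast+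
  show "continuous_on {0..T} (\<lambda>t. w t \<omega>)" if "\<omega> \<in> space M" for \<omega>
  proof -
    have "continuous_on {0..} (\<lambda>t. w t \<omega>)" using BM that unfolding std_brownian_def by blast
    then show ?thesis by (rule continuous_on_subset) auto
  qed
  show "w t \<in> borel_measurable M" if "t \<in> {0..T}" for t
    by (rule filtered_ps_measurable[where t=t, OF fps]) (use BM that in \<open>simp add: std_brownian_def\<close>)
  show "u t \<in> borel_measurable M" if "t \<in> {0..T}" for t
    by (rule filtered_ps_measurable[OF fps], rule progressive_measurable[OF u]) (use that in simp)
qed

text \<open>Ito's formula: \<open>d g(x) = ito_drift (\<nabla>g) (\<nabla>\<^sup>2g) f G dt + (\<nabla>g v* G) dw\<close>.\<close>

definition ito_drift :: "real^'d \<Rightarrow> real^'d^'d \<Rightarrow> real^'d \<Rightarrow> real^'p^'d \<Rightarrow> real" where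
  "ito_drift a H f G = a \<bullet> f + 1/2 * trace (transpose G ** H ** G)"

lemma abs_ito_drift_le: "\<bar>ito_drift a H f G\<bar> \<le> \<bar>a \<bullet> f\<bar> + \<bar>trace (transpose G ** H ** G)\<bar> / 2"
  unfolding ito_drift_def
  using abs_triangle_ineq[of "a \<bullet> f" "1/2 * trace (transpose G ** H ** G)"] by (simp add: abs_mult)

lemma yhat_nth:
  assumes "t = last_grid tp k s"
  shows "yhat tp k g a H f G u x w s \<omega> $ j =
    g j (x t \<omega>) + (s - t) * ito_drift (a j (x t \<omega>)) (H j (x t \<omega>)) (f t (x t \<omega>) (u t \<omega>)) (G t (x t \<omega>) (u t \<omega>))
      + (a j (x t \<omega>) v* G t (x t \<omega>) (u t \<omega>)) \<bullet> (w s \<omega> - w t \<omega>)"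
  unfolding assms yhat_def Let_def ito_drift_def
  by (simp add: matrix_vector_mult_def inner_vec_def)

lemma gain_bounded_on_path:
  fixes \<xi> :: "real \<Rightarrow> real^'d" and \<nu> :: "real \<Rightarrow> 'v::topological_space"
    and G :: "real \<Rightarrow> real^'d \<Rightarrow> 'v \<Rightarrow> real^'p^'d"
  assumes \<xi>: "continuous_on {0..T} \<xi>" and a: "continuous_on UNIV a"
    and G: "continuous_on UNIV (\<lambda>((t, z), v). G t z v)"
    and ctrl: "(\<exists>\<kappa>. continuous_on UNIV (\<lambda>(t, z). \<kappa> t z) \<and> (\<forall>t\<in>{0..T}. \<nu> t = \<kappa> t (\<xi> t)))
      \<or> (\<forall>t z v v'. a z v* G t z v = a z v* G t z v')"
  obtains K where "\<And>t. t \<in> {0..T} \<Longrightarrow> norm (a (\<xi> t) v* G t (\<xi> t) (\<nu> t)) \<le> K"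
proof -
  have cont: "continuous_on {0..T} (\<lambda>t. a (\<xi> t) v* G t (\<xi> t) (c t))"
    if c: "continuous_on {0..T} c" for c
  proof -
    have "continuous_on {0..T} (\<lambda>t. G t (\<xi> t) (c t))"
      using continuous_on_compose2[OF G continuous_on_Pair[OF continuous_on_Pair[OF continuous_on_id \<xi>] c]]
      by simp
    moreover have "continuous_on {0..T} (\<lambda>t. a (\<xi> t))" using continuous_on_compose2[OF a \<xi>] by simp
    ultimately show ?thesis
      using continuous_on_compose2[OF continuous_on_vector_matrix_mult continuous_on_Pair] by fastforce
  qed
  \<comment> \<open>Either way the gain along the path equals a gain along a continuous control path.\<close>
  obtain c where c: "continuous_on {0..T} c"
    and eq: "\<And>t. t \<in> {0..T} \<Longrightarrow> a (\<xi> t) v* G t (\<xi> t) (\<nu> t) = a (\<xi> t) v* G t (\<xi> t) (c t)"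
    using ctrl
  proof
    assume "\<exists>\<kappa>. continuous_on UNIV (\<lambda>(t, z). \<kappa> t z) \<and> (\<forall>t\<in>{0..T}. \<nu> t = \<kappa> t (\<xi> t))"
    then obtain \<kappa> where \<kappa>: "continuous_on UNIV (\<lambda>(t, z). \<kappa> t z)" "\<forall>t\<in>{0..T}. \<nu> t = \<kappa> t (\<xi> t)"
      by blast
    have "continuous_on {0..T} (\<lambda>t. \<kappa> t (\<xi> t))"
      using continuous_on_compose2[OF \<kappa>(1) continuous_on_Pair[OF continuous_on_id \<xi>]] by simp
    then show thesis using \<kappa>(2) by (intro that) auto
  qed (intro that[of "\<lambda>_. \<nu> 0"], auto)
  obtain K where "\<And>t. t \<in> {0..T} \<Longrightarrow> norm (a (\<xi> t) v* G t (\<xi> t) (c t)) \<le> K"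
    using continuous_on_compact_bound[OF compact_Icc cont[OF c]] by blast
  then show ?thesis using eq that by metis
qed

lemma inner_bounded_on_path:
  fixes \<xi> :: "real \<Rightarrow> 'a::topological_space" and a :: "'a \<Rightarrow> 'b::real_inner"
  assumes \<xi>: "continuous_on {0..T} \<xi>" and a: "continuous_on UNIV a"
    and \<phi>: "\<And>t. t \<in> {0..T} \<Longrightarrow> norm (\<phi> t) \<le> B"
  obtains K where "\<And>t. t \<in> {0..T} \<Longrightarrow> \<bar>a (\<xi> t) \<bullet> \<phi> t\<bar> \<le> K"
proof -
  obtain Ka where Ka: "\<And>t. t \<in> {0..T} \<Longrightarrow> norm (a (\<xi> t)) \<le> Ka"
    using continuous_on_compact_bound[OF compact_Icc continuous_on_compose2[OF a \<xi>]] by auto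
  have "\<bar>a (\<xi> t) \<bullet> \<phi> t\<bar> \<le> Ka * B" if t: "t \<in> {0..T}" for t
  proof -
    have "\<bar>a (\<xi> t) \<bullet> \<phi> t\<bar> \<le> norm (a (\<xi> t)) * norm (\<phi> t)" by (rule Cauchy_Schwarz_ineq2)
    also have "\<dots> \<le> Ka * B"
      using Ka[OF t] \<phi>[OF t] by (intro mult_mono) (auto intro: order_trans[OF norm_ge_zero])
    finally show ?thesis .
  qed
  then show ?thesis using that by blast
qed

lemma const_has_derivative_matrix_eq_0:
  assumes "((\<lambda>_. c) has_derivative (\<lambda>h. A *v h)) (at z)"
  shows "A = (0::real^'n^'m)"
proof -
  have "(\<lambda>h. A *v h) = (\<lambda>h. 0)" using assms has_derivative_const by (rule has_derivative_unique)
  then show ?thesis by (simp add: matrix_eq fun_eq_iff)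
qed

lemma ito_coefficients_bounded_on_path:
  fixes \<xi> :: "real \<Rightarrow> real^'d" and \<nu> :: "real \<Rightarrow> 'v::topological_space"
    and G :: "real \<Rightarrow> real^'d \<Rightarrow> 'v \<Rightarrow> real^'p^'d"
  assumes \<xi>: "continuous_on {0..T} \<xi>"
    and a_deriv: "\<And>z. (a has_derivative (\<lambda>h. H z *v h)) (at z)"
    and H: "continuous_on UNIV H"
    and f: "\<And>t. t \<in> {0..T} \<Longrightarrow> norm (f t (\<xi> t) (\<nu> t)) \<le> B"
    and G: "bounded (range (\<lambda>((t, z), v). G t z v))
      \<or> (\<exists>a0. \<forall>z. a z = a0) \<and> continuous_on UNIV (\<lambda>((t, z), v). G t z v)"
    and ctrl: "(\<exists>\<kappa>. continuous_on UNIV (\<lambda>(t, z). \<kappa> t z) \<and> (\<forall>t\<in>{0..T}. \<nu> t = \<kappa> t (\<xi> t)))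
      \<or> (\<forall>t z v v'. a z v* G t z v = a z v* G t z v')"
  obtains K where
    "\<And>t. t \<in> {0..T} \<Longrightarrow> \<bar>ito_drift (a (\<xi> t)) (H (\<xi> t)) (f t (\<xi> t) (\<nu> t)) (G t (\<xi> t) (\<nu> t))\<bar> \<le> K"
    "\<And>t. t \<in> {0..T} \<Longrightarrow> norm (a (\<xi> t) v* G t (\<xi> t) (\<nu> t)) \<le> K"
proof -
  have a: "continuous_on UNIV a"
    using a_deriv has_derivative_continuous continuous_at_imp_continuous_on by blast
  obtain Kf where af: "\<And>t. t \<in> {0..T} \<Longrightarrow> \<bar>a (\<xi> t) \<bullet> f t (\<xi> t) (\<nu> t)\<bar> \<le> Kf"
    using inner_bounded_on_path[where \<phi>="\<lambda>t. f t (\<xi> t) (\<nu> t)", OF \<xi> a f] by blast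
  from G show ?thesis
  proof
    assume "bounded (range (\<lambda>((t, z), v). G t z v))"
    then obtain KG where KG: "\<And>t z v. norm (G t z v) \<le> KG"
      unfolding bounded_iff by fastforce
    obtain Ka where Ka: "\<And>t. t \<in> {0..T} \<Longrightarrow> norm (a (\<xi> t)) \<le> Ka"
      using continuous_on_compact_bound[OF compact_Icc continuous_on_compose2[OF a \<xi>]] by auto
    obtain KH where KH: "\<And>t. t \<in> {0..T} \<Longrightarrow> norm (H (\<xi> t)) \<le> KH"
      using continuous_on_compact_bound[OF compact_Icc continuous_on_compose2[OF H \<xi>]] by auto
    obtain Ktr where Ktr: "\<And>Gm Hm. norm Gm \<le> KG \<Longrightarrow> norm Hm \<le> KH \<Longrightarrow>
        \<bar>trace (transpose (Gm::real^'p^'d) ** (Hm::real^'d^'d) ** Gm)\<bar> \<le> Ktr"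
      using bounded_on_cball_Times[where \<phi>="\<lambda>A B. trace (transpose A ** B ** A)",
          OF continuous_on_trace_congruence] by force
    obtain Kg where Kg: "\<And>v Gm. norm v \<le> Ka \<Longrightarrow> norm Gm \<le> KG \<Longrightarrow>
        norm ((v::real^'d) v* (Gm::real^'p^'d)) \<le> Kg"
      using bounded_on_cball_Times[where \<phi>="\<lambda>v A. v v* A", OF continuous_on_vector_matrix_mult] by blast
    show thesis
    proof (rule that[of "max (Kf + Ktr / 2) Kg"])
      fix t assume t: "t \<in> {0..T}"
      show "\<bar>ito_drift (a (\<xi> t)) (H (\<xi> t)) (f t (\<xi> t) (\<nu> t)) (G t (\<xi> t) (\<nu> t))\<bar> \<le> max (Kf + Ktr / 2) Kg"
        using abs_ito_drift_le[of "a (\<xi> t)" "H (\<xi> t)" "f t (\<xi> t) (\<nu> t)" "G t (\<xi> t) (\<nu> t)"]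
          af[OF t] Ktr[OF KG[of t "\<xi> t" "\<nu> t"] KH[OF t]] by linarith
      show "norm (a (\<xi> t) v* G t (\<xi> t) (\<nu> t)) \<le> max (Kf + Ktr / 2) Kg"
        using Kg[OF Ka[OF t] KG[of t "\<xi> t" "\<nu> t"]] by linarith
    qed
  next
    assume "(\<exists>a0. \<forall>z. a z = a0) \<and> continuous_on UNIV (\<lambda>((t, z), v). G t z v)"
    then obtain a0 where a0: "a = (\<lambda>_. a0)" and Gc: "continuous_on UNIV (\<lambda>((t, z), v). G t z v)"
      by (auto simp: fun_eq_iff)
    \<comment> \<open>A constant gradient has vanishing Hessian, so the Ito correction disappears.\<close>
    have H0: "H z = 0" for z
      using a_deriv[of z] unfolding a0 by (rule const_has_derivative_matrix_eq_0)
    obtain Kg where Kg: "\<And>t. t \<in> {0..T} \<Longrightarrow> norm (a (\<xi> t) v* G t (\<xi> t) (\<nu> t)) \<le> Kg"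
      using gain_bounded_on_path[OF \<xi> a Gc ctrl] by blast
    show thesis
    proof (rule that[of "max Kf Kg"])
      fix t assume t: "t \<in> {0..T}"
      show "\<bar>ito_drift (a (\<xi> t)) (H (\<xi> t)) (f t (\<xi> t) (\<nu> t)) (G t (\<xi> t) (\<nu> t))\<bar> \<le> max Kf Kg"
        using af[OF t] by (simp add: ito_drift_def H0 trace_def)
      show "norm (a (\<xi> t) v* G t (\<xi> t) (\<nu> t)) \<le> max Kf Kg"
        using Kg[OF t] by simp
    qed
  qed
qed

lemma yhat_nth_error:
  assumes P: "is_partition T tp k" and T: "T > 0" and s: "s \<in> {0..T}" and t: "t = last_grid tp k s"
    and drift: "\<bar>ito_drift (a j (x t \<omega>)) (H j (x t \<omega>)) (f t (x t \<omega>) (u t \<omega>)) (G t (x t \<omega>) (u t \<omega>))\<bar> \<le> K"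
    and gain: "norm (a j (x t \<omega>) v* G t (x t \<omega>) (u t \<omega>)) \<le> K"
  shows "\<bar>yhat tp k g a H f G u x w s \<omega> $ j - g j (x s \<omega>)\<bar>
    \<le> \<bar>g j (x t \<omega>) - g j (x s \<omega>)\<bar> + mesh tp k * K + K * norm (w s \<omega> - w t \<omega>)"
proof -
  have st: "0 \<le> s - t" "s - t \<le> mesh tp k" using last_grid_bounds[OF P T s] t by auto
  have "\<bar>(s - t) * ito_drift (a j (x t \<omega>)) (H j (x t \<omega>)) (f t (x t \<omega>) (u t \<omega>)) (G t (x t \<omega>) (u t \<omega>))\<bar>
      \<le> mesh tp k * K"
    unfolding abs_mult using st drift by (intro mult_mono) auto
  moreover have "\<bar>(a j (x t \<omega>) v* G t (x t \<omega>) (u t \<omega>)) \<bullet> (w s \<omega> - w t \<omega>)\<bar> \<le> K * norm (w s \<omega> - w t \<omega>)"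
    using Cauchy_Schwarz_ineq2 gain by (rule order_trans[OF _ mult_right_mono]) simp
  ultimately show ?thesis unfolding yhat_nth[OF t] by linarith
qed

lemma yhat_nth_uniform_convergence:
  assumes T: "T > 0" and P: "\<And>n. is_partition T (tp n) (k n)"
    and mesh: "(\<lambda>n. mesh (tp n) (k n)) \<longlonglongrightarrow> 0"
    and y: "continuous_on {0..T} (\<lambda>t. g j (x t \<omega>))" and w: "continuous_on {0..T} (\<lambda>t. w t \<omega>)"
    and drift: "\<And>t. t \<in> {0..T} \<Longrightarrow>
      \<bar>ito_drift (a j (x t \<omega>)) (H j (x t \<omega>)) (f t (x t \<omega>) (u t \<omega>)) (G t (x t \<omega>) (u t \<omega>))\<bar> \<le> K"
    and gain: "\<And>t. t \<in> {0..T} \<Longrightarrow> norm (a j (x t \<omega>) v* G t (x t \<omega>) (u t \<omega>)) \<le> K"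
    and e: "e > 0"
  shows "eventually (\<lambda>n. \<forall>s\<in>{0..T}. \<bar>yhat (tp n) (k n) g a H f G u x w s \<omega> $ j - g j (x s \<omega>)\<bar> \<le> e)
    sequentially"
proof -
  have K: "0 \<le> K" using gain[of 0] T by (meson atLeastAtMost_iff less_imp_le norm_ge_zero order_refl order_trans)
  define \<epsilon> where "\<epsilon> = e / (3 * (K + 1))"
  have \<epsilon>: "\<epsilon> > 0" "\<epsilon> * K \<le> e / 3" using e K by (auto simp: \<epsilon>_def field_simps)
  obtain d1 where d1: "d1 > 0" "\<And>s t. s \<in> {0..T} \<Longrightarrow> t \<in> {0..T} \<Longrightarrow> dist t s < d1 \<Longrightarrow>
      dist (g j (x t \<omega>)) (g j (x s \<omega>)) < e / 3"
    using compact_uniformly_continuous[OF y compact_Icc] e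
    unfolding uniformly_continuous_on_def by (metis divide_pos_pos zero_less_numeral)
  obtain d2 where d2: "d2 > 0" "\<And>s t. s \<in> {0..T} \<Longrightarrow> t \<in> {0..T} \<Longrightarrow> dist t s < d2 \<Longrightarrow>
      dist (w t \<omega>) (w s \<omega>) < \<epsilon>"
    using compact_uniformly_continuous[OF w compact_Icc] \<epsilon>(1)
    unfolding uniformly_continuous_on_def by metis
  have "eventually (\<lambda>n. \<bar>mesh (tp n) (k n)\<bar> < min (min d1 d2) \<epsilon>) sequentially"
    using tendstoD[OF mesh, of "min (min d1 d2) \<epsilon>"] d1 d2 \<epsilon> by (simp add: dist_real_def)
  then show ?thesis
  proof (rule eventually_mono, intro ballI)
    fix n s assume m: "\<bar>mesh (tp n) (k n)\<bar> < min (min d1 d2) \<epsilon>" and s: "s \<in> {0..T}"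
    define t where "t = last_grid (tp n) (k n) s"
    have "0 \<le> t" "t \<le> s" "s - t \<le> mesh (tp n) (k n)"
      using last_grid_bounds[OF P T s] unfolding t_def by auto
    then have t: "t \<in> {0..T}" and "dist t s < d1" "dist s t < d2" using s m by (auto simp: dist_real_def)
    then have "\<bar>g j (x t \<omega>) - g j (x s \<omega>)\<bar> < e / 3" "norm (w s \<omega> - w t \<omega>) < \<epsilon>"
      using d1(2)[OF s t] d2(2)[OF t s] by (auto simp: dist_real_def dist_norm)
    moreover have "mesh (tp n) (k n) * K \<le> \<epsilon> * K" "K * norm (w s \<omega> - w t \<omega>) \<le> \<epsilon> * K"
      using m K calculation(2) by (auto simp: mult.commute intro!: mult_left_mono)
    ultimately show "\<bar>yhat (tp n) (k n) g a H f G u x w s \<omega> $ j - g j (x s \<omega>)\<bar> \<le> e"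
      using yhat_nth_error[where g=g and w=w and a=a and H=H and f=f and G=G and u=u and x=x and \<omega>=\<omega>,
          OF P[of n] T s t_def drift[OF t] gain[OF t]] \<epsilon>(2) by linarith
  qed
qed

lemma eventually_exceedance_iff_uniform_limit:
  fixes Y :: "nat \<Rightarrow> 'm::finite \<Rightarrow> 'b \<Rightarrow> real" and y :: "'m \<Rightarrow> 'b \<Rightarrow> real"
  assumes unif: "\<And>j e. e > 0 \<Longrightarrow> eventually (\<lambda>n. \<forall>s\<in>S. \<bar>Y n j s - y j s\<bar> \<le> e) sequentially"
    and bdd: "\<And>j. bdd_above (y j ` S)" and nz: "\<And>j. (SUP s\<in>S. y j s) \<noteq> 0"
  shows "eventually (\<lambda>n. (\<exists>s\<in>S. \<exists>j. Y n j s > 0) \<longleftrightarrow> (\<exists>s\<in>S. \<exists>j. y j s > 0)) sequentially"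
proof (cases "\<exists>s\<in>S. \<exists>j. y j s > 0")
  case True
  then obtain j s0 where s0: "s0 \<in> S" "y j s0 > 0" by blast
  have "eventually (\<lambda>n. \<forall>s\<in>S. \<bar>Y n j s - y j s\<bar> \<le> y j s0 / 2) sequentially"
    using unif[of "y j s0 / 2" j] s0(2) by simp
  then show ?thesis
  proof (rule eventually_mono)
    fix n assume "\<forall>s\<in>S. \<bar>Y n j s - y j s\<bar> \<le> y j s0 / 2"
    then have "\<bar>Y n j s0 - y j s0\<bar> \<le> y j s0 / 2" using s0(1) by blast
    then have "Y n j s0 > 0" using s0(2) by linarith
    then show "(\<exists>s\<in>S. \<exists>j. Y n j s > 0) \<longleftrightarrow> (\<exists>s\<in>S. \<exists>j. y j s > 0)" using s0 by blast
  qed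
next
  assume nonpos: "\<not> (\<exists>s\<in>S. \<exists>j. y j s > 0)"
  show ?thesis
  proof (cases "S = {}")
    case False
    have neg: "(SUP s\<in>S. y j s) < 0" for j
    proof -
      have "(SUP s\<in>S. y j s) \<le> 0" using nonpos by (intro cSUP_least[OF False]) (auto simp: not_less)
      then show ?thesis using nz[of j] by linarith
    qed
    have "eventually (\<lambda>n. \<forall>j. \<forall>s\<in>S. \<bar>Y n j s - y j s\<bar> \<le> - (SUP s\<in>S. y j s) / 2) sequentially"
      using neg by (intro eventually_all_finite unif) simp
    then show ?thesis
    proof (rule eventually_mono)
      fix n assume close: "\<forall>j. \<forall>s\<in>S. \<bar>Y n j s - y j s\<bar> \<le> - (SUP s\<in>S. y j s) / 2"
      have "Y n j s \<le> 0" if s: "s \<in> S" for j s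
      proof -
        have "\<bar>Y n j s - y j s\<bar> \<le> - (SUP s\<in>S. y j s) / 2" using close s by blast
        moreover have "y j s \<le> (SUP s\<in>S. y j s)" by (rule cSUP_upper[OF s bdd])
        ultimately show ?thesis using neg[of j] by linarith
      qed
      then show "(\<exists>s\<in>S. \<exists>j. Y n j s > 0) \<longleftrightarrow> (\<exists>s\<in>S. \<exists>j. y j s > 0)"
        using nonpos by (meson not_le)
    qed
  qed simp
qed

text \<open>Right-continuity only reaches rational times to the right of a point, hence \<open>T\<close> is added.\<close>

definition rat_points :: "real \<Rightarrow> real set" where
  "rat_points T = insert T {q\<in>\<rat>. 0 \<le> q \<and> q \<le> T}"

lemma countable_rat_points: "countable (rat_points T)"
  unfolding rat_points_def using countable_rat by (auto intro: countable_subset)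

lemma rat_points_subset: "0 \<le> T \<Longrightarrow> rat_points T \<subseteq> {0..T}"
  unfolding rat_points_def by auto

lemma exceeds_at_rat_point:
  fixes \<phi> :: "real \<Rightarrow> real"
  assumes rc: "\<And>s. s \<in> {0..<T} \<Longrightarrow> continuous (at_right s) \<phi>" and s: "s \<in> {0..T}" and c: "c < \<phi> s"
  obtains q where "q \<in> rat_points T" "c < \<phi> q"
proof (cases "s = T")
  case True
  then show ?thesis using that c by (auto simp: rat_points_def)
next
  case False
  then have sT: "s < T" "s \<in> {0..<T}" using s by auto
  have "eventually (\<lambda>r. c < \<phi> r) (at_right s)"
    using rc[OF sT(2)] c unfolding continuous_within by (rule order_tendstoD)
  then obtain b where b: "b > s" "\<And>r. s < r \<Longrightarrow> r < b \<Longrightarrow> c < \<phi> r"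
    unfolding eventually_at_right[OF sT(1)] by blast
  obtain q where q: "q \<in> \<rat>" "s < q" "q < min b T"
    using Rats_dense_in_real[of s "min b T"] b sT by auto
  show ?thesis by (rule that[of q]) (use q b s in \<open>auto simp: rat_points_def\<close>)
qed

lemma continuous_on_Icc_at_right:
  assumes "continuous_on {a..b} \<phi>" "s \<in> {a..<b}"
  shows "continuous (at_right s) \<phi>"
proof -
  have "continuous_on {s..b} \<phi>" by (rule continuous_on_subset[OF assms(1)]) (use assms(2) in auto)
  then have "continuous (at s within {s..b}) \<phi>"
    using assms(2) by (auto simp: continuous_on_eq_continuous_within)
  then show ?thesis using assms(2) by (simp add: at_within_Icc_at_right)
qed

lemma cSUP_rat_points:
  fixes \<phi> :: "real \<Rightarrow> real"
  assumes T: "0 \<le> T" and \<phi>: "continuous_on {0..T} \<phi>"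
  shows "(SUP s\<in>{0..T}. \<phi> s) = (SUP q\<in>rat_points T. \<phi> q)"
proof (rule antisym)
  have bdd: "bdd_above (\<phi> ` {0..T})"
    using compact_continuous_image[OF \<phi> compact_Icc] by (auto intro: bounded_imp_bdd_above compact_imp_bounded)
  then have bdd': "bdd_above (\<phi> ` rat_points T)"
    using rat_points_subset[OF T] by (meson bdd_above_mono image_mono)
  show "(SUP q\<in>rat_points T. \<phi> q) \<le> (SUP s\<in>{0..T}. \<phi> s)"
    using bdd rat_points_subset[OF T] by (intro cSUP_subset_mono) (auto simp: rat_points_def)
  show "(SUP s\<in>{0..T}. \<phi> s) \<le> (SUP q\<in>rat_points T. \<phi> q)"
  proof (rule cSUP_least)
    fix s assume s: "s \<in> {0..T}"
    show "\<phi> s \<le> (SUP q\<in>rat_points T. \<phi> q)"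
    proof (rule ccontr)
      assume "\<not> ?thesis"
      then obtain q where "q \<in> rat_points T" "(SUP q\<in>rat_points T. \<phi> q) < \<phi> q"
        using exceeds_at_rat_point[OF continuous_on_Icc_at_right[OF \<phi>] s] by (metis not_le)
      then show False using cSUP_upper[OF _ bdd'] by (meson not_le)
    qed
  qed (use T in simp)
qed

lemma exceedance_event_measurable:
  fixes \<phi> :: "'m::countable \<Rightarrow> real \<Rightarrow> 'a \<Rightarrow> real"
  assumes T: "0 \<le> T"
    and rc: "\<And>j \<omega> s. \<omega> \<in> space M \<Longrightarrow> s \<in> {0..<T} \<Longrightarrow> continuous (at_right s) (\<lambda>r. \<phi> j r \<omega>)"
    and meas: "\<And>j q. q \<in> {0..T} \<Longrightarrow> \<phi> j q \<in> borel_measurable M"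
  shows "{\<omega>\<in>space M. \<exists>s\<in>{0..T}. \<exists>j. 0 < \<phi> j s \<omega>} \<in> sets M"
proof -
  have "{\<omega>\<in>space M. \<exists>s\<in>{0..T}. \<exists>j. 0 < \<phi> j s \<omega>}
      = (\<Union>j. \<Union>q\<in>rat_points T. {\<omega>\<in>space M. 0 < \<phi> j q \<omega>})" (is "?L = ?R")
  proof
    show "?L \<subseteq> ?R"
    proof
      fix \<omega> assume "\<omega> \<in> ?L"
      then obtain j s where \<omega>: "\<omega> \<in> space M" and s: "s \<in> {0..T}" "0 < \<phi> j s \<omega>" by blast
      obtain q where "q \<in> rat_points T" "0 < \<phi> j q \<omega>"
        using exceeds_at_rat_point[of T "\<lambda>r. \<phi> j r \<omega>", OF rc[OF \<omega>] s] .
      then show "\<omega> \<in> ?R" using \<omega> by blast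
    qed
    show "?R \<subseteq> ?L" using rat_points_subset[OF T] by fastforce
  qed
  also have "\<dots> \<in> sets M"
  proof (intro sets.countable_UN'' countableI_type countable_rat_points)
    fix j q assume "q \<in> rat_points T"
    then have "\<phi> j q \<in> borel_measurable M" using rat_points_subset[OF T] meas by blast
    then show "{\<omega>\<in>space M. 0 < \<phi> j q \<omega>} \<in> sets M" by measurable
  qed
  finally show ?thesis .
qed

lemma (in finite_measure) AE_SUP_path_neq:
  fixes Y :: "real \<Rightarrow> 'a \<Rightarrow> real"
  assumes T: "0 \<le> T"
    and cont: "\<And>\<omega>. \<omega> \<in> space M \<Longrightarrow> continuous_on {0..T} (\<lambda>s. Y s \<omega>)"
    and meas: "\<And>q. q \<in> {0..T} \<Longrightarrow> Y q \<in> borel_measurable M"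
    and null: "measure M {\<omega>\<in>space M. (SUP s\<in>{0..T}. Y s \<omega>) = c} = 0"
  shows "AE \<omega> in M. (SUP s\<in>{0..T}. Y s \<omega>) \<noteq> c"
proof -
  have bdd: "bdd_above ((\<lambda>q. Y q \<omega>) ` rat_points T)" if "\<omega> \<in> space M" for \<omega>
    using compact_continuous_image[OF cont[OF that] compact_Icc] rat_points_subset[OF T]
    by (meson bdd_above_mono bounded_imp_bdd_above compact_imp_bounded image_mono)
  have "(\<lambda>\<omega>. SUP q\<in>rat_points T. Y q \<omega>) \<in> borel_measurable M"
    using meas rat_points_subset[OF T] bdd by (intro borel_measurable_cSUP countable_rat_points) auto
  then have "{\<omega>\<in>space M. (SUP q\<in>rat_points T. Y q \<omega>) = c} \<in> sets M" by measurable
  moreover have "{\<omega>\<in>space M. (SUP s\<in>{0..T}. Y s \<omega>) = c} = {\<omega>\<in>space M. (SUP q\<in>rat_points T. Y q \<omega>) = c}"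
    using cSUP_rat_points[OF T cont] by auto
  ultimately have "{\<omega>\<in>space M. (SUP s\<in>{0..T}. Y s \<omega>) = c} \<in> null_sets M"
    using null by (simp add: null_sets_def emeasure_eq_measure)
  then show ?thesis by (rule AE_I') auto
qed

lemma (in finite_measure) measure_tendsto_AE_eventually_eq:
  assumes A: "\<And>n. A n \<in> sets M" and B: "B \<in> sets M"
    and ev: "AE \<omega> in M. eventually (\<lambda>n. \<omega> \<in> A n \<longleftrightarrow> \<omega> \<in> B) sequentially"
  shows "(\<lambda>n. measure M (A n)) \<longlonglongrightarrow> measure M B"
proof -
  have "(\<lambda>n. integral\<^sup>L M (indicator (A n) :: 'a \<Rightarrow> real)) \<longlonglongrightarrow> integral\<^sup>L M (indicator B)"
  proof (rule integral_dominated_convergence[where w="\<lambda>_. 1"])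
    show "AE \<omega> in M. (\<lambda>n. indicator (A n) \<omega> :: real) \<longlonglongrightarrow> indicator B \<omega>"
      using ev by eventually_elim (auto intro: tendsto_eventually elim: eventually_mono simp: indicator_def)
  qed (use A B in \<open>auto simp: indicator_def\<close>)
  then show ?thesis using A B by (simp add: Int_absorb2 sets.sets_into_space)
qed

lemma yhat_nth_continuous_at_right:
  assumes P: "is_partition T tp k" and w: "continuous_on {0..T} (\<lambda>t. w t \<omega>)" and s: "s \<in> {0..<T}"
  shows "continuous (at_right s) (\<lambda>r. yhat tp k g a H f G u x w r \<omega> $ j)"
proof -
  obtain i where i: "i \<le> k" "tp i \<le> s" "i < k \<Longrightarrow> s < tp (Suc i)"
    using last_grid_cell[OF P, of s] s by auto
  have "i < k" using i s P unfolding is_partition_def by (metis atLeastLessThan_iff le_neq_implies_less not_le)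
  define b where "b = tp (Suc i)"
  have sb: "s < b" and bT: "b \<le> T"
    using i \<open>i < k\<close> partition_in_range[OF P, of "Suc i"] by (auto simp: b_def)
  define t where "t = tp i"
  define \<psi> where "\<psi> r = g j (x t \<omega>)
      + (r - t) * ito_drift (a j (x t \<omega>)) (H j (x t \<omega>)) (f t (x t \<omega>) (u t \<omega>)) (G t (x t \<omega>) (u t \<omega>))
      + (a j (x t \<omega>) v* G t (x t \<omega>) (u t \<omega>)) \<bullet> (w r \<omega> - w t \<omega>)" for r
  have yhat_eq: "yhat tp k g a H f G u x w r \<omega> $ j = \<psi> r" if "r \<in> {s..<b}" for r
  proof -
    have "t = last_grid tp k r"
      using last_grid_eqI[OF P i(1), of r] i that by (auto simp: t_def b_def)
    then show ?thesis unfolding \<psi>_def by (rule yhat_nth)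
  qed
  have "continuous_on {s..b} (\<lambda>r. w r \<omega>)" using w by (rule continuous_on_subset) (use s bT in auto)
  then have "continuous_on {s..b} \<psi>" unfolding \<psi>_def by (intro continuous_intros)
  then have "(\<psi> \<longlongrightarrow> \<psi> s) (at_right s)"
    using continuous_on_Icc_at_right[of s b \<psi> s] sb by (simp add: continuous_within)
  moreover have "eventually (\<lambda>r. \<psi> r = yhat tp k g a H f G u x w r \<omega> $ j) (at_right s)"
    using eventually_at_right_real[OF sb] by eventually_elim (simp add: yhat_eq)
  ultimately show ?thesis
    unfolding continuous_within using yhat_eq[of s] sb by (auto intro: Lim_transform_eventually)
qed

lemma yhat_nth_measurable:
  fixes f :: "real \<Rightarrow> real^'d \<Rightarrow> 'v::euclidean_space \<Rightarrow> real^'d"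
    and G :: "real \<Rightarrow> real^'d \<Rightarrow> 'v \<Rightarrow> real^'p^'d"
  assumes P: "is_partition T tp k" and T: "T > 0" and s: "s \<in> {0..T}"
    and f: "(\<lambda>((t, z), v). f t z v) \<in> borel_measurable borel"
    and G: "(\<lambda>((t, z), v). G t z v) \<in> borel_measurable borel"
    and g: "continuous_on UNIV (g j)" and a: "continuous_on UNIV (a j)" and H: "continuous_on UNIV (H j)"
    and x: "\<And>t. t \<in> {0..T} \<Longrightarrow> x t \<in> borel_measurable M"
    and u: "\<And>t. t \<in> {0..T} \<Longrightarrow> u t \<in> borel_measurable M"
    and w: "\<And>t. t \<in> {0..T} \<Longrightarrow> w t \<in> borel_measurable M"
  shows "(\<lambda>\<omega>. yhat tp k g a H f G u x w s \<omega> $ j) \<in> borel_measurable M"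
proof -
  define t where "t = last_grid tp k s"
  have "t \<in> {0..T}" using last_grid_bounds[OF P T s] s by (auto simp: t_def)
  then have [measurable]: "x t \<in> borel_measurable M" "u t \<in> borel_measurable M"
    "w t \<in> borel_measurable M" "w s \<in> borel_measurable M"
    using x u w s by auto
  have arg: "(\<lambda>\<omega>. ((t, x t \<omega>), u t \<omega>)) \<in> borel_measurable M" by measurable
  have [measurable]: "(\<lambda>\<omega>. f t (x t \<omega>) (u t \<omega>)) \<in> borel_measurable M"
    "(\<lambda>\<omega>. G t (x t \<omega>) (u t \<omega>)) \<in> borel_measurable M"
    using measurable_compose[OF arg f] measurable_compose[OF arg G] by simp_all
  have [measurable]: "(\<lambda>\<omega>. g j (x t \<omega>)) \<in> borel_measurable M"
    by (rule borel_measurable_continuous_on[OF g]) measurable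
  have [measurable]: "(\<lambda>\<omega>. a j (x t \<omega>)) \<in> borel_measurable M"
    by (rule borel_measurable_continuous_on[OF a]) measurable
  have [measurable]: "(\<lambda>\<omega>. H j (x t \<omega>)) \<in> borel_measurable M"
    by (rule borel_measurable_continuous_on[OF H]) measurable
  have [measurable]:
    "(\<lambda>\<omega>. trace (transpose (G t (x t \<omega>) (u t \<omega>)) ** H j (x t \<omega>) ** G t (x t \<omega>) (u t \<omega>))) \<in> borel_measurable M"
    by (intro borel_measurable_continuous_on_Pair[where \<phi>="\<lambda>A B. trace (transpose A ** B ** A)",
          OF continuous_on_trace_congruence]; measurable)
  have [measurable]: "(\<lambda>\<omega>. a j (x t \<omega>) v* G t (x t \<omega>) (u t \<omega>)) \<in> borel_measurable M"
    by (intro borel_measurable_continuous_on_Pair[where \<phi>="\<lambda>v A. v v* A",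
          OF continuous_on_vector_matrix_mult]; measurable)
  show ?thesis unfolding yhat_nth[OF t_def] ito_drift_def by measurable
qed

lemma yhat_exceedance_eventually_iff:
  fixes g :: "'m::finite \<Rightarrow> real^'d \<Rightarrow> real" and G :: "real \<Rightarrow> real^'d \<Rightarrow> 'v::topological_space \<Rightarrow> real^'p^'d"
  assumes T: "T > 0" and P: "\<And>n. is_partition T (tp n) (k n)"
    and mesh: "(\<lambda>n. mesh (tp n) (k n)) \<longlonglongrightarrow> 0"
    and x: "continuous_on {0..T} (\<lambda>t. x t \<omega>)" and w: "continuous_on {0..T} (\<lambda>t. w t \<omega>)"
    and g: "\<And>j. continuous_on UNIV (g j)"
    and a_deriv: "\<And>j z. (a j has_derivative (\<lambda>h. H j z *v h)) (at z)"
    and H: "\<And>j. continuous_on UNIV (H j)"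
    and f: "\<And>t. t \<in> {0..T} \<Longrightarrow> norm (f t (x t \<omega>) (u t \<omega>)) \<le> B"
    and G: "\<And>j. bounded (range (\<lambda>((t, z), v). G t z v))
      \<or> (\<exists>a0. \<forall>z. a j z = a0) \<and> continuous_on UNIV (\<lambda>((t, z), v). G t z v)"
    and ctrl: "\<And>j. (\<exists>\<kappa>. continuous_on UNIV (\<lambda>(t, z). \<kappa> t z) \<and> (\<forall>t\<in>{0..T}. u t \<omega> = \<kappa> t (x t \<omega>)))
      \<or> (\<forall>t z v v'. a j z v* G t z v = a j z v* G t z v')"
    and nz: "\<And>j. (SUP s\<in>{0..T}. g j (x s \<omega>)) \<noteq> 0"
  shows "eventually (\<lambda>n. (\<exists>s\<in>{0..T}. yhat (tp n) (k n) g a H f G u x w s \<omega> \<notin> {v. \<forall>j. v $ j \<le> 0})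
    \<longleftrightarrow> (\<exists>s\<in>{0..T}. x s \<omega> \<notin> {z. \<forall>j. g j z \<le> 0})) sequentially"
proof -
  have y: "continuous_on {0..T} (\<lambda>t. g j (x t \<omega>))" for j
    using continuous_on_compose2[OF g x] by simp
  have unif: "eventually (\<lambda>n. \<forall>s\<in>{0..T}. \<bar>yhat (tp n) (k n) g a H f G u x w s \<omega> $ j - g j (x s \<omega>)\<bar> \<le> e)
      sequentially" if "e > 0" for j e
  proof -
    obtain K where
      "\<And>t. t \<in> {0..T} \<Longrightarrow>
        \<bar>ito_drift (a j (x t \<omega>)) (H j (x t \<omega>)) (f t (x t \<omega>) (u t \<omega>)) (G t (x t \<omega>) (u t \<omega>))\<bar> \<le> K"
      "\<And>t. t \<in> {0..T} \<Longrightarrow> norm (a j (x t \<omega>) v* G t (x t \<omega>) (u t \<omega>)) \<le> K"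
      using ito_coefficients_bounded_on_path[where \<xi>="\<lambda>t. x t \<omega>" and \<nu>="\<lambda>t. u t \<omega>" and f=f and G=G,
          OF x a_deriv[of j] H[of j] f G[of j] ctrl[of j]] by blast
    then show ?thesis
      using yhat_nth_uniform_convergence[where g=g and x=x and a=a and H=H and f=f and G=G and u=u
          and w=w and \<omega>=\<omega> and j=j,
          OF T P mesh y[of j] w] that by blast
  qed
  have bdd: "bdd_above ((\<lambda>s. g j (x s \<omega>)) ` {0..T})" for j
    using compact_continuous_image[OF y[of j] compact_Icc] by (auto intro: bounded_imp_bdd_above compact_imp_bounded)
  show ?thesis
    using eventually_exceedance_iff_uniform_limit[OF unif bdd nz] by (simp add: not_le)
qed

theorem corollary1:
  fixes M :: "'a measure" and F :: "real \<Rightarrow> 'a measure"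
    and w :: "real \<Rightarrow> 'a \<Rightarrow> real^'p" and T :: real
    and f :: "real \<Rightarrow> real^'d \<Rightarrow> real^'k \<Rightarrow> real^'d"
    and G :: "real \<Rightarrow> real^'d \<Rightarrow> real^'k \<Rightarrow> real^'p^'d"
    and u :: "real \<Rightarrow> 'a \<Rightarrow> real^'k" and x :: "real \<Rightarrow> 'a \<Rightarrow> real^'d"
    and g :: "'m::finite \<Rightarrow> real^'d \<Rightarrow> real" and a :: "'m \<Rightarrow> real^'d \<Rightarrow> real^'d"
    and H :: "'m \<Rightarrow> real^'d \<Rightarrow> real^'d^'d"
    and tp :: "nat \<Rightarrow> nat \<Rightarrow> real" and k :: "nat \<Rightarrow> nat"
  assumes fps: "filtered_ps M F"
    and BM: "std_brownian M F w"
    and T_pos: "T > 0"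
    and f_meas: "(\<lambda>((t, z), v). f t z v) \<in> borel_measurable borel"
    and G_meas: "(\<lambda>((t, z), v). G t z v) \<in> borel_measurable borel"
    and u_prog: "progressive F u"
    and sol: "sde_solution M F w T f G u x"
    and g_deriv: "\<And>j z. (g j has_derivative (\<lambda>h. a j z \<bullet> h)) (at z)"
    and a_deriv: "\<And>j z. (a j has_derivative (\<lambda>h. H j z *v h)) (at z)"
    and H_cont: "\<And>j. continuous_on UNIV (H j)"
    and ctrl: "\<And>j. (\<exists>\<kappa> :: real \<Rightarrow> real^'d \<Rightarrow> real^'k.
                      lipschitz_fun (\<lambda>(t, z). \<kappa> t z) \<and>
                      (\<forall>t\<in>{0..T}. \<forall>\<omega>\<in>space M. u t \<omega> = \<kappa> t (x t \<omega>)))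
                 \<or> (\<forall>t z v v'. a j z \<bullet> f t z v = a j z \<bullet> f t z v' \<and>
                               a j z v* G t z v = a j z v* G t z v')"
    and reg: "\<And>j. ((\<exists>G0. \<forall>t z v. G t z v = G0) \<and> lipschitz_fun (a j))
                \<or> ((\<exists>a0. \<forall>z. a j z = a0) \<and> lipschitz_fun (\<lambda>((t, z), v). G t z v))
                \<or> (bounded (range (a j)) \<and> lipschitz_fun (a j) \<and>
                   bounded (range (\<lambda>((t, z), v). G t z v)) \<and> lipschitz_fun (\<lambda>((t, z), v). G t z v))"
    and f_bdd: "AE \<omega> in M. \<exists>B. \<forall>t\<in>{0..T}. norm (f t (x t \<omega>) (u t \<omega>)) \<le> B"
    and f_sq: "(\<integral>\<^sup>+\<omega>. (\<integral>\<^sup>+t\<in>{0..T}. ennreal ((norm (f t (x t \<omega>) (u t \<omega>)))\<^sup>2) \<partial>lborel) \<partial>M) < \<infinity>"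
    and G_bdd: "\<exists>C. \<forall>t\<in>{0..T}. (\<integral>\<^sup>+\<omega>. ennreal ((norm (G t (x t \<omega>) (u t \<omega>)))\<^sup>2) \<partial>M) \<le> ennreal C"
    and G_sq: "(\<integral>\<^sup>+\<omega>. (\<integral>\<^sup>+t\<in>{0..T}. ennreal ((norm (G t (x t \<omega>) (u t \<omega>)))\<^sup>2) \<partial>lborel) \<partial>M) < \<infinity>"
    and part: "\<And>n. is_partition T (tp n) (k n)"
    and mesh_lim: "(\<lambda>n. mesh (tp n) (k n)) \<longlonglongrightarrow> 0"
    and mesh_card: "\<exists>c. \<forall>n. real (k n) * mesh (tp n) (k n) \<le> c * T"
    and no_touch: "\<And>j. measure M {\<omega>\<in>space M. (SUP s\<in>{0..T}. g j (x s \<omega>)) = 0} = 0"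
  shows "(\<lambda>n. measure M {\<omega>\<in>space M. \<exists>s\<in>{0..T}.
             yhat (tp n) (k n) g a H f G u x w s \<omega> \<notin> {v. \<forall>j. v $ j \<le> 0}})
         \<longlonglongrightarrow> measure M {\<omega>\<in>space M. \<exists>s\<in>{0..T}. x s \<omega> \<notin> {z. \<forall>j. g j z \<le> 0}}"
proof -
  interpret prob_space M using fps unfolding filtered_ps_def by blast
  note paths = sde_solution_paths[OF fps BM u_prog sol]
  note x = paths(1) and w = paths(2) and xm = paths(3) and wm = paths(4) and um = paths(5)
  have g: "\<And>j. continuous_on UNIV (g j)" and a: "\<And>j. continuous_on UNIV (a j)"
    using g_deriv a_deriv by (blast intro: continuous_at_imp_continuous_on has_derivative_continuous)+
  have G: "bounded (range (\<lambda>((t, z), v). G t z v))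
      \<or> (\<exists>a0. \<forall>z. a j z = a0) \<and> continuous_on UNIV (\<lambda>((t, z), v). G t z v)" for j
    using reg[of j] by (auto simp: bounded_iff intro: lipschitz_fun_continuous_on)
  have ctrl': "(\<exists>\<kappa>. continuous_on UNIV (\<lambda>(t, z). \<kappa> t z) \<and> (\<forall>t\<in>{0..T}. u t \<omega> = \<kappa> t (x t \<omega>)))
      \<or> (\<forall>t z v v'. a j z v* G t z v = a j z v* G t z v')" if "\<omega> \<in> space M" for \<omega> j
    using ctrl[of j] that by (blast intro: lipschitz_fun_continuous_on)
  have nz: "AE \<omega> in M. \<forall>j. (SUP s\<in>{0..T}. g j (x s \<omega>)) \<noteq> 0"
  proof (intro eventually_all_finite AE_SUP_path_neq)
    fix j
    show "continuous_on {0..T} (\<lambda>s. g j (x s \<omega>))" if "\<omega> \<in> space M" for \<omega>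
      using continuous_on_compose2[OF g x[OF that]] by simp
    show "(\<lambda>\<omega>. g j (x q \<omega>)) \<in> borel_measurable M" if "q \<in> {0..T}" for q
      using borel_measurable_continuous_on[OF g xm[OF that]] .
  qed (use T_pos no_touch in auto)
  show ?thesis
  proof (rule measure_tendsto_AE_eventually_eq)
    show "{\<omega>\<in>space M. \<exists>s\<in>{0..T}. yhat (tp n) (k n) g a H f G u x w s \<omega> \<notin> {v. \<forall>j. v $ j \<le> 0}} \<in> sets M" for n
      using exceedance_event_measurable[where \<phi>="\<lambda>j s \<omega>. yhat (tp n) (k n) g a H f G u x w s \<omega> $ j",
          OF _ yhat_nth_continuous_at_right[OF part w] yhat_nth_measurable[OF part T_pos _ f_meas G_meas g a H_cont xm um wm]]
        T_pos by (simp add: not_le)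
    show "{\<omega>\<in>space M. \<exists>s\<in>{0..T}. x s \<omega> \<notin> {z. \<forall>j. g j z \<le> 0}} \<in> sets M"
      using exceedance_event_measurable[where \<phi>="\<lambda>j s \<omega>. g j (x s \<omega>)",
          OF _ continuous_on_Icc_at_right[OF continuous_on_compose2[OF g x]] borel_measurable_continuous_on[OF g xm]]
        T_pos by (simp add: not_le)
    show "AE \<omega> in M. eventually (\<lambda>n.
        \<omega> \<in> {\<omega>\<in>space M. \<exists>s\<in>{0..T}. yhat (tp n) (k n) g a H f G u x w s \<omega> \<notin> {v. \<forall>j. v $ j \<le> 0}}
        \<longleftrightarrow> \<omega> \<in> {\<omega>\<in>space M. \<exists>s\<in>{0..T}. x s \<omega> \<notin> {z. \<forall>j. g j z \<le> 0}}) sequentially"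
      using f_bdd nz AE_space
    proof eventually_elim
      case (elim \<omega>)
      then have \<omega>: "\<omega> \<in> space M" by blast
      obtain B where B: "\<And>t. t \<in> {0..T} \<Longrightarrow> norm (f t (x t \<omega>) (u t \<omega>)) \<le> B" using elim by blast
      show ?case
        using yhat_exceedance_eventually_iff[where x=x and w=w and u=u and \<omega>=\<omega> and f=f and G=G,
            OF T_pos part mesh_lim x[OF \<omega>] w[OF \<omega>] g a_deriv H_cont B G ctrl'[OF \<omega>]] elim \<omega>
        by simp
    qed
  qed
qed

end
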